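(* In the standing setting below, let $(u,v)$ be a bounded, decaying, optimal integrable positive solution and suppose $p\frac{n-\beta\gamma}{\gamma-1}-\sigma_2<n$. Then $v(x)\simeq|x|^{-\frac{p\frac{n-\beta\gamma}{\gamma-1}-(\beta\gamma+\sigma_2)}{\gamma-1}}$.
   Context: Standing setting: $n\ge3$, $\beta>0$, $\gamma>1$, $\beta\gamma<n$, $p,q>0$ with $q\ge p$, $pq>(\gamma-1)^2$, $\sigma_1,\sigma_2\in(-\beta\gamma,\infty)$ with $\sigma_1\le\sigma_2$, $q_0+p_0\le\frac{n-\beta\gamma}{\gamma-1}$ where $q_0=\frac{\beta\gamma(\gamma-1+q)+(\gamma-1)\sigma_1+\sigma_2 q}{pq-(\gamma-1)^2}$, $p_0=\frac{\beta\gamma(\gamma-1+p)+(\gamma-1)\sigma_2+\sigma_1 p}{pq-(\gamma-1)^2}$; $c_1,c_2$ are double bounded (i.e. $1/C\le c_i(x)\le C$ for some $C>0$), and $(u,v)$ is a positive solution (nonnegative $L^1_{loc}$ functions, positive, satisfying the equations a.e.) of $u(x)=c_1(x)W_{\beta,\gamma}(|y|^{\sigma_1}v^q)(x)$, $v(x)=c_2(x)W_{\beta,\gamma}(|y|^{\sigma_2}u^p)(x)$, where $W_{\beta,\gamma}(f)(x)=\int_0^\infty\Big(\frac{\int_{B_t(x)}f(y)\,dy}{t^{n-\beta\gamma}}\Big)^{\frac{1}{\gamma-1}}\frac{dt}{t}$. For positive $f$, $f(x)\simeq g(x)$ means $1/c\le f(x)/g(x)\le c$ for some $c>0$ and all sufficiently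 large $|x|$; decaying means $u\simeq|x|^{-\theta_1}$, $v\simeq|x|^{-\theta_2}$ for some $\theta_1,\theta_2>0$. Optimal integrable means $(u,v)\in L^r\times L^s$ for all $r>\frac{n(\gamma-1)}{n-\beta\gamma}$ and $s>\max\big\{\frac{n(\gamma-1)}{n-\beta\gamma},\frac{n(\gamma-1)}{p\frac{n-\beta\gamma}{\gamma-1}-(\beta\gamma+\sigma_2)}\big\}$. *)

theory Defs
  imports "HOL-Analysis.Analysis"
begin

definition enn_rpow :: "ennreal \<Rightarrow> real \<Rightarrow> ennreal" where
  "enn_rpow a r = (if a = \<infinity> then \<infinity> else ennreal (enn2real a powr r))"

definition wolff :: "real \<Rightarrow> real \<Rightarrow> (real^'n \<Rightarrow> real) \<Rightarrow> real^'n \<Rightarrow> ennreal" where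
  "wolff \<beta> \<gamma> f x =
     (\<integral>\<^sup>+ t. indicator {0<..} t *
        (enn_rpow ((\<integral>\<^sup>+ y. indicator (ball x t) y * ennreal (f y) \<partial>lebesgue)
                     / ennreal (t powr (real CARD('n) - \<beta> * \<gamma>))) (1 / (\<gamma> - 1))
         / ennreal t) \<partial>lborel)"

definition asymp_simeq :: "(real^'n \<Rightarrow> real) \<Rightarrow> (real^'n \<Rightarrow> real) \<Rightarrow> bool" where
  "asymp_simeq f g \<longleftrightarrow> (\<exists>c>0. \<exists>R. \<forall>x. norm x \<ge> R \<longrightarrow>
       1 / c \<le> f x / g x \<and> f x / g x \<le> c)"

definition double_bounded :: "(real^'n \<Rightarrow> real) \<Rightarrow> bool" where
  "double_bounded c \<longleftrightarrow> (\<exists>C>0. \<forall>x. 1 / C \<le> c x \<and> c x \<le> C)"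

definition in_Lp :: "real \<Rightarrow> (real^'n \<Rightarrow> real) \<Rightarrow> bool" where
  "in_Lp r f \<longleftrightarrow> f \<in> borel_measurable lebesgue \<and> integrable lebesgue (\<lambda>x. \<bar>f x\<bar> powr r)"

definition locally_integrable :: "(real^'n \<Rightarrow> real) \<Rightarrow> bool" where
  "locally_integrable f \<longleftrightarrow> f \<in> borel_measurable lebesgue \<and>
      (\<forall>K. compact K \<longrightarrow> set_integrable lebesgue K f)"

definition positive_solution ::
  "real \<Rightarrow> real \<Rightarrow> real \<Rightarrow> real \<Rightarrow> real \<Rightarrow> real \<Rightarrow> (real^'n \<Rightarrow> real) \<Rightarrow> (real^'n \<Rightarrow> real)
    \<Rightarrow> (real^'n \<Rightarrow> real) \<Rightarrow> (real^'n \<Rightarrow> real) \<Rightarrow> bool" where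
  "positive_solution \<beta> \<gamma> p q \<sigma>\<^sub>1 \<sigma>\<^sub>2 c\<^sub>1 c\<^sub>2 u v \<longleftrightarrow>
     locally_integrable u \<and> locally_integrable v \<and>
     (\<forall>x. u x > 0) \<and> (\<forall>x. v x > 0) \<and>
     (AE x in lebesgue. ennreal (u x) =
        ennreal (c\<^sub>1 x) * wolff \<beta> \<gamma> (\<lambda>y. norm y powr \<sigma>\<^sub>1 * v y powr q) x) \<and>
     (AE x in lebesgue. ennreal (v x) =
        ennreal (c\<^sub>2 x) * wolff \<beta> \<gamma> (\<lambda>y. norm y powr \<sigma>\<^sub>2 * u y powr p) x)"

end

theory Submission
  imports Defs
begin

(* Write u \<simeq> |x|^(-\<theta>\<^sub>1), v \<simeq> |x|^(-\<theta>\<^sub>2). In W(f)(x) only the scales t \<in> [2|x|, 4|x|]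
  are kept: there B(x,t) contains a fixed annulus, and also the annulus |x|/2 \<le> |y| < |x|.
  The first gives the universal bound u \<gtrsim> |x|^(-(n-\<beta>\<gamma>)/(\<gamma>-1)), i.e. \<theta>\<^sub>1 \<le> (n-\<beta>\<gamma>)/(\<gamma>-1);
  the second, fed with the decay of u, gives \<theta>\<^sub>2(\<gamma>-1) \<le> p\<theta>\<^sub>1 - \<sigma>\<^sub>2 - \<beta>\<gamma>, hence
  \<theta>\<^sub>2(\<gamma>-1) \<le> k := p(n-\<beta>\<gamma>)/(\<gamma>-1) - \<beta>\<gamma> - \<sigma>\<^sub>2. Conversely v \<in> L^s forces \<theta>\<^sub>2 s \<ge> n,
  and since v \<in> L^s for every s > n(\<gamma>-1)/k (here k < n - \<beta>\<gamma> is used), \<theta>\<^sub>2(\<gamma>-1) \<ge> k. *)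

lemma emeasure_annulus:
  fixes c :: "'a::euclidean_space"
  assumes "\<rho> \<ge> 0"
  shows "emeasure lebesgue (ball c (2*\<rho>) - ball c \<rho>) =
    ennreal (unit_ball_vol DIM('a) * (2^DIM('a) - 1) * \<rho>^DIM('a))"
proof -
  have "emeasure lebesgue (ball c (2*\<rho>) - ball c \<rho>) =
      emeasure lebesgue (ball c (2*\<rho>)) - emeasure lebesgue (ball c \<rho>)"
    using assms by (intro emeasure_Diff) (auto simp: emeasure_ball)
  also have "\<dots> = ennreal (unit_ball_vol DIM('a) * (2*\<rho>)^DIM('a) - unit_ball_vol DIM('a) * \<rho>^DIM('a))"
    using assms by (simp add: emeasure_ball ennreal_minus power_mono)
  finally show ?thesis
    by (simp add: power_mult_distrib algebra_simps)
qed

lemma nn_integral_ge_annulus: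
  fixes g :: "'a::euclidean_space \<Rightarrow> ennreal"
  assumes "\<rho> \<ge> 0" "m \<ge> 0" "\<And>y. y \<in> ball 0 (2*\<rho>) - ball 0 \<rho> \<Longrightarrow> ennreal m \<le> g y"
  shows "ennreal (m * unit_ball_vol DIM('a) * (2^DIM('a) - 1) * \<rho>^DIM('a)) \<le> (\<integral>\<^sup>+ y. g y \<partial>lebesgue)"
proof -
  let ?A = "ball (0::'a) (2*\<rho>) - ball 0 \<rho>"
  have "(1::real) \<le> 2^DIM('a)" by simp
  then have "ennreal (m * unit_ball_vol DIM('a) * (2^DIM('a) - 1) * \<rho>^DIM('a)) = ennreal m * emeasure lebesgue ?A"
    using assms by (simp only: emeasure_annulus) (simp add: ennreal_mult' mult.assoc)
  also have "\<dots> = (\<integral>\<^sup>+ y. ennreal m * indicator ?A y \<partial>lebesgue)"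
    by (rule nn_integral_cmult_indicator[symmetric]) auto
  also have "\<dots> \<le> (\<integral>\<^sup>+ y. g y \<partial>lebesgue)"
    by (intro nn_integral_mono) (auto simp: indicator_def intro!: assms(3))
  finally show ?thesis .
qed

lemma norm_powr_ge_on_annulus:
  fixes y :: "'a::real_normed_vector"
  assumes "\<rho> > 0" "\<rho> \<le> norm y" "norm y \<le> 2*\<rho>"
  shows "min 1 (2 powr \<sigma>) * \<rho> powr \<sigma> \<le> norm y powr \<sigma>"
proof (cases "\<sigma> \<ge> 0")
  case True
  then have "\<rho> powr \<sigma> \<le> norm y powr \<sigma>" using assms by (intro powr_mono2) auto
  moreover have "1 \<le> 2 powr \<sigma>" using True by (simp add: ge_one_powr_ge_zero)
  ultimately show ?thesis by simp
next
  case False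
  then have "(2*\<rho>) powr \<sigma> \<le> norm y powr \<sigma>" using assms by (intro powr_mono2') auto
  moreover have "2 powr \<sigma> \<le> 1" using False powr_mono[of \<sigma> 0 2] by simp
  ultimately show ?thesis using assms by (simp add: powr_mult)
qed

lemma annulus_subset_ball:
  fixes x :: "'a::real_normed_vector"
  assumes "2 * \<rho> \<le> norm x" "2 * norm x \<le> t"
  shows "ball 0 (2 * \<rho>) - ball 0 \<rho> \<subseteq> ball x t"
proof
  fix y :: 'a assume "y \<in> ball 0 (2 * \<rho>) - ball 0 \<rho>"
  then have "norm x + norm y < t" using assms by auto
  then show "y \<in> ball x t" using norm_triangle_ineq4[of x y] by (simp add: dist_norm)
qed

lemma ball_integral_weighted_power_ge:
  fixes w :: "'a::euclidean_space \<Rightarrow> real"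
  assumes c: "c > 0" and \<theta>: "\<theta> \<ge> 0" and s: "s > 0"
    and lower: "\<And>y. norm y \<ge> R \<Longrightarrow> (1/c) * norm y powr (-\<theta>) \<le> w y"
  obtains K where "K > 0"
    "\<And>\<rho> S. \<rho> > 0 \<Longrightarrow> \<rho> \<ge> R \<Longrightarrow> ball 0 (2*\<rho>) - ball 0 \<rho> \<subseteq> S \<Longrightarrow>
      ennreal (K * \<rho> powr (\<sigma> - \<theta> * s + DIM('a)))
        \<le> (\<integral>\<^sup>+ y. indicator S y * ennreal (norm y powr \<sigma> * w y powr s) \<partial>lebesgue)"
proof
  define V where "V = unit_ball_vol DIM('a) * (2^DIM('a) - 1)"
  have "(1::real) < 2^DIM('a)" by (rule one_less_power) auto
  then have V: "V > 0" by (simp add: V_def)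
  define K where "K = min 1 (2 powr \<sigma>) * (1/c * 2 powr (-\<theta>)) powr s * V"
  show "K > 0" using V c by (simp add: K_def)
  fix \<rho> :: real and S :: "'a set"
  assume \<rho>: "\<rho> > 0" "\<rho> \<ge> R" and S: "ball 0 (2*\<rho>) - ball 0 \<rho> \<subseteq> S"
  define m where "m = min 1 (2 powr \<sigma>) * \<rho> powr \<sigma> * ((1/c * 2 powr (-\<theta>)) * \<rho> powr (-\<theta>)) powr s"
  have "ennreal (m * V * \<rho>^DIM('a))
      \<le> (\<integral>\<^sup>+ y. indicator S y * ennreal (norm y powr \<sigma> * w y powr s) \<partial>lebesgue)"
    unfolding V_def mult.assoc[symmetric]
  proof (rule nn_integral_ge_annulus)
    show "0 \<le> \<rho>" "0 \<le> m" using \<rho> by (auto simp: m_def)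
    fix y assume y: "y \<in> ball (0::'a) (2*\<rho>) - ball 0 \<rho>"
    then have ny: "\<rho> \<le> norm y" "norm y \<le> 2*\<rho>" by auto
    have "(1/c * 2 powr (-\<theta>)) * \<rho> powr (-\<theta>) = 1/c * (2*\<rho>) powr (-\<theta>)"
      using \<rho> by (simp add: powr_mult)
    also have "\<dots> \<le> 1/c * norm y powr (-\<theta>)"
      using ny \<rho> c \<theta> by (intro mult_left_mono powr_mono2') auto
    also have "\<dots> \<le> w y" using lower ny \<rho> by auto
    finally have "((1/c * 2 powr (-\<theta>)) * \<rho> powr (-\<theta>)) powr s \<le> w y powr s"
      using c s by (intro powr_mono2) auto
    with norm_powr_ge_on_annulus[OF \<rho>(1) ny] have "m \<le> norm y powr \<sigma> * w y powr s"
      unfolding m_def by (intro mult_mono) auto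
    then show "ennreal m \<le> indicator S y * ennreal (norm y powr \<sigma> * w y powr s)"
      using y S by (auto intro: ennreal_leI)
  qed
  moreover have "m * V * \<rho>^DIM('a) = K * \<rho> powr (\<sigma> - \<theta> * s + DIM('a))"
  proof -
    have "((1/c * 2 powr (-\<theta>)) * \<rho> powr (-\<theta>)) powr s = (1/c * 2 powr (-\<theta>)) powr s * \<rho> powr (- (\<theta> * s))"
      using \<rho> c by (subst powr_mult) (auto simp: powr_powr)
    moreover have "\<rho> powr (\<sigma> - \<theta> * s + DIM('a)) = \<rho> powr \<sigma> * \<rho> powr (- (\<theta> * s)) * \<rho>^DIM('a)"
      using \<rho> by (simp add: powr_add powr_diff powr_minus powr_realpow divide_inverse)
    ultimately show ?thesis
      by (simp add: m_def K_def)
  qed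
  ultimately show "ennreal (K * \<rho> powr (\<sigma> - \<theta> * s + DIM('a)))
        \<le> (\<integral>\<^sup>+ y. indicator S y * ennreal (norm y powr \<sigma> * w y powr s) \<partial>lebesgue)"
    by simp
qed

lemma powr_exponent_le_of_frequently_le:
  fixes a b K C :: real
  assumes "K > 0" "C > 0" "\<And>R. \<exists>r\<ge>R. r > 0 \<and> K * r powr a \<le> C * r powr b"
  shows "a \<le> b"
proof (rule ccontr)
  assume "\<not> a \<le> b"
  then have ab: "a - b > 0" by simp
  define R where "R = max 1 ((C/K + 1) powr (1/(a-b)))"
  obtain r where r: "r \<ge> R" "r > 0" "K * r powr a \<le> C * r powr b" using assms(3) by blast
  have "r powr (a - b) \<le> C / K"
    using r assms by (simp add: powr_diff field_simps)
  moreover have "r powr (a-b) \<ge> R powr (a-b)" using r ab by (intro powr_mono2) (auto simp: R_def)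
  moreover have "R powr (a-b) \<ge> ((C/K + 1) powr (1/(a-b))) powr (a-b)"
    using ab assms by (intro powr_mono2) (auto simp: R_def)
  moreover have "((C/K + 1) powr (1/(a-b))) powr (a-b) = C/K + 1"
    using ab assms by (simp add: powr_powr)
  ultimately show False by simp
qed

lemma AE_lebesgue_exists_norm_ge:
  assumes "AE x in lebesgue. P x"
  shows "\<exists>x::'a::euclidean_space. norm x \<ge> R \<and> P x"
proof (rule ccontr)
  assume none: "\<not> ?thesis"
  from assms obtain N where N: "{x \<in> space lebesgue. \<not> P x} \<subseteq> N" "emeasure lebesgue N = 0" "N \<in> sets lebesgue"
    by (rule AE_E)
  obtain c :: 'a where c: "norm c = \<bar>R\<bar> + 1" using vector_choose_size[of "\<bar>R\<bar>+1"] by auto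
  have "ball c 1 \<subseteq> N"
  proof
    fix y assume "y \<in> ball c 1"
    then have "norm y > \<bar>R\<bar>" using c norm_triangle_ineq2[of c y] by (auto simp: dist_norm norm_minus_commute)
    then show "y \<in> N" using none N by auto
  qed
  then have "emeasure lebesgue (ball c 1) \<le> emeasure lebesgue N" using N by (intro emeasure_mono) auto
  moreover have "emeasure lebesgue (ball c 1) > 0" by (simp add: emeasure_ball)
  ultimately show False using N by simp
qed

lemma not_integrable_of_power_lower_bound:
  fixes g :: "'a::euclidean_space \<Rightarrow> real" and \<alpha> :: real
  assumes c: "c > 0" and \<alpha>: "0 \<le> \<alpha>" "\<alpha> < DIM('a)"
    and lower: "\<And>y. norm y \<ge> R \<Longrightarrow> c * norm y powr (-\<alpha>) \<le> g y"
  shows "\<not> integrable lebesgue g"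
proof
  assume "integrable lebesgue g"
  then have "(\<integral>\<^sup>+x. ennreal (norm (g x)) \<partial>lebesgue) < \<infinity>"
    by (simp add: integrable_iff_bounded)
  then obtain F where F: "(\<integral>\<^sup>+x. ennreal (norm (g x)) \<partial>lebesgue) = ennreal F" "F \<ge> 0"
    using less_top ennreal_cases by (metis ennreal_less_top infinity_ennreal_def)
  define w where "w y = c * norm y powr (-\<alpha>)" for y :: 'a
  obtain K where K: "K > 0" and ball: "\<And>\<rho> S. \<rho> > 0 \<Longrightarrow> \<rho> \<ge> R \<Longrightarrow> ball 0 (2*\<rho>) - ball 0 \<rho> \<subseteq> S \<Longrightarrow>
      ennreal (K * \<rho> powr (0 - \<alpha> * 1 + DIM('a)))
        \<le> (\<integral>\<^sup>+ y. indicator S y * ennreal (norm y powr 0 * w y powr 1) \<partial>lebesgue)"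
    by (rule ball_integral_weighted_power_ge[where \<sigma>=0, of "1/c" \<alpha> 1 R w]) (use c \<alpha> in \<open>auto simp: w_def\<close>)
  let ?S = "{y. norm y \<ge> R}"
  have "DIM('a) - \<alpha> \<le> 0"
  proof (rule powr_exponent_le_of_frequently_le[OF K, of "F + 1"])
    show "F + 1 > 0" using F by simp
    fix R' :: real
    define \<rho> where "\<rho> = max R' (max R 1)"
    have \<rho>: "\<rho> > 0" "\<rho> \<ge> R" "\<rho> \<ge> R'" by (auto simp: \<rho>_def)
    have "ennreal (K * \<rho> powr (DIM('a) - \<alpha>)) \<le> (\<integral>\<^sup>+ y. indicator ?S y * ennreal (norm y powr 0 * w y powr 1) \<partial>lebesgue)"
      using ball[OF \<rho>(1,2)] \<rho> by (simp add: subset_eq)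
    also have "\<dots> \<le> (\<integral>\<^sup>+x. ennreal (norm (g x)) \<partial>lebesgue)"
    proof (intro nn_integral_mono)
      fix y :: 'a
      have "norm y powr 0 * w y powr 1 \<le> w y" using c by (simp add: w_def)
      moreover have "w y \<le> norm (g y)" if "y \<in> ?S" using lower that by (force simp: w_def)
      ultimately show "indicator ?S y * ennreal (norm y powr 0 * w y powr 1) \<le> ennreal (norm (g y))"
        by (auto simp: indicator_def intro: ennreal_leI)
    qed
    finally have "K * \<rho> powr (DIM('a) - \<alpha>) \<le> F" using F by (auto simp: ennreal_le_iff2)
    then show "\<exists>r\<ge>R'. r > 0 \<and> K * r powr (DIM('a) - \<alpha>) \<le> (F + 1) * r powr 0"
      using \<rho> by (intro exI[of _ \<rho>]) auto
  qed
  with \<alpha> show False by simp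
qed

lemma asymp_simeq_powrE:
  assumes "asymp_simeq f (\<lambda>x. norm x powr (- \<theta>))"
  obtains c R where "c > 0"
    "\<And>x. norm x \<ge> R \<Longrightarrow> (1/c) * norm x powr (- \<theta>) \<le> f x"
    "\<And>x. norm x \<ge> R \<Longrightarrow> f x \<le> c * norm x powr (- \<theta>)"
proof -
  from assms obtain c R where c: "c > 0" and R: "\<And>x. norm x \<ge> R \<Longrightarrow>
       1 / c \<le> f x / norm x powr (- \<theta>) \<and> f x / norm x powr (- \<theta>) \<le> c"
    unfolding asymp_simeq_def by blast
  have "(1/c) * norm x powr (- \<theta>) \<le> f x \<and> f x \<le> c * norm x powr (- \<theta>)"
    if x: "norm x \<ge> max R 1" for x :: "real^'a"
  proof -
    from x have "norm x powr (- \<theta>) > 0" by auto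
    with R[of x] x show ?thesis by (simp add: field_simps)
  qed
  then show ?thesis using that[OF c, of "max R 1"] by blast
qed

lemma decay_exponent_ge_of_in_Lp:
  fixes w :: "real^'n \<Rightarrow> real" and \<theta> S :: real
  assumes c: "c > 0" and \<theta>: "\<theta> > 0" and S: "S \<ge> 0"
    and lower: "\<And>y. norm y \<ge> R \<Longrightarrow> (1/c) * norm y powr (-\<theta>) \<le> w y"
    and Lp: "\<And>s. s > S \<Longrightarrow> in_Lp s w"
  shows "CARD('n) \<le> \<theta> * S"
proof (rule ccontr)
  assume "\<not> ?thesis"
  moreover have "real CARD('n) > 0" by simp
  ultimately have "S < real CARD('n) / \<theta>" using \<theta> by (simp add: field_simps)
  define s where "s = (S + real CARD('n) / \<theta>) / 2"
  have s: "S < s" "\<theta> * s < real CARD('n)"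
    using \<open>S < real CARD('n) / \<theta>\<close> \<theta> by (auto simp: s_def field_simps)
  with S have "s > 0" by simp
  have "\<not> integrable lebesgue (\<lambda>y. \<bar>w y\<bar> powr s)"
  proof (rule not_integrable_of_power_lower_bound)
    show "(1/c) powr s > 0" "0 \<le> \<theta> * s" "\<theta> * s < DIM(real^'n)"
      using c \<theta> s \<open>s > 0\<close> by auto
    fix y :: "real^'n" assume y: "norm y \<ge> R"
    have "((1/c) * norm y powr (-\<theta>)) powr s \<le> \<bar>w y\<bar> powr s"
      using lower[OF y] c \<open>s > 0\<close> by (intro powr_mono2) auto
    moreover have "((1/c) * norm y powr (-\<theta>)) powr s = (1/c) powr s * norm y powr (-(\<theta> * s))"
      by (subst powr_mult) (auto simp: powr_powr)
    ultimately show "(1/c) powr s * norm y powr (-(\<theta> * s)) \<le> \<bar>w y\<bar> powr s" by simp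
  qed
  with Lp[OF s(1)] show False by (simp add: in_Lp_def)
qed

lemma ennreal_le_divide_ennreal:
  assumes "0 < b" "b \<le> c" "ennreal a \<le> I" "0 \<le> a"
  shows "ennreal (a / c) \<le> I / ennreal b"
proof (cases I)
  case (real i)
  with assms have "a \<le> i" "0 \<le> i" by (auto simp: ennreal_le_iff2)
  then have "a / c \<le> i / b" using assms by (intro frac_le) auto
  then show ?thesis using real assms by (simp add: divide_ennreal)
next
  case top
  then show ?thesis using assms by (simp add: ennreal_top_divide)
qed

lemma ennreal_powr_le_enn_rpow:
  assumes "ennreal a \<le> I" "0 \<le> a" "0 < s"
  shows "ennreal (a powr s) \<le> enn_rpow I s"
proof (cases "I = \<infinity>")
  case False
  then obtain i where i: "I = ennreal i" "0 \<le> i" by (cases I) auto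
  with assms have "a powr s \<le> i powr s" by (intro powr_mono2) (auto simp: ennreal_le_iff2)
  then show ?thesis using i False by (simp add: enn_rpow_def)
qed (simp add: enn_rpow_def)

lemma mult_le_of_ennreal_eq_mult:
  assumes "ennreal a = ennreal c * W" "ennreal L \<le> W" "0 \<le> L" "k \<le> c" "0 \<le> k" "0 \<le> a"
  shows "k * L \<le> a"
proof -
  have "ennreal (k * L) = ennreal k * ennreal L" using assms by (simp add: ennreal_mult)
  also have "\<dots> \<le> ennreal c * W" using assms by (intro mult_mono) auto
  also have "\<dots> = ennreal a" using assms(1) by simp
  finally show ?thesis using assms(6) by (subst (asm) ennreal_le_iff) auto
qed

(* Only the scales t \<in> [2r, 4r] are used: there the balls have radius comparable to r,
  and the t-integral over this range of dt/t contributes a factor comparable to 1. *)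
lemma wolff_ge_of_ball_integral_ge:
  fixes f :: "real^'n \<Rightarrow> real" and x :: "real^'n"
  assumes r: "r > 0" and \<gamma>: "\<gamma> > 1" and d: "\<beta> * \<gamma> < real CARD('n)" and A: "A > 0"
    and ball: "\<And>t. 2*r \<le> t \<Longrightarrow> t \<le> 4*r \<Longrightarrow>
      ennreal (A * r powr E) \<le> (\<integral>\<^sup>+ y. indicator (ball x t) y * ennreal (f y) \<partial>lebesgue)"
  shows "ennreal ((A * 4 powr (-(real CARD('n) - \<beta> * \<gamma>))) powr (1/(\<gamma>-1)) / 2
           * r powr ((E - (real CARD('n) - \<beta> * \<gamma>))/(\<gamma>-1))) \<le> wolff \<beta> \<gamma> f x"
proof -
  define d where "d = real CARD('n) - \<beta> * \<gamma>"
  have "d > 0" using d by (simp add: d_def)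
  define L where "L = ((A * r powr E / (4*r) powr d) powr (1/(\<gamma>-1))) / (4*r)"
  have "L \<ge> 0" unfolding L_def using r by simp
  have integrand: "ennreal L * indicator {2*r..4*r} t \<le>
      indicator {0<..} t *
        (enn_rpow ((\<integral>\<^sup>+ y. indicator (ball x t) y * ennreal (f y) \<partial>lebesgue)
                     / ennreal (t powr (real CARD('n) - \<beta> * \<gamma>))) (1 / (\<gamma> - 1))
         / ennreal t)" for t
  proof (cases "2*r \<le> t \<and> t \<le> 4*r")
    case True
    then have t: "t > 0" using r by auto
    let ?I = "\<integral>\<^sup>+ y. indicator (ball x t) y * ennreal (f y) \<partial>lebesgue"
    have "ennreal (A * r powr E / (4*r) powr d) \<le> ?I / ennreal (t powr d)"
      using True t A r \<open>d > 0\<close> by (intro ennreal_le_divide_ennreal ball powr_mono2) auto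
    then have "ennreal ((A * r powr E / (4*r) powr d) powr (1/(\<gamma>-1))) \<le>
        enn_rpow (?I / ennreal (t powr d)) (1/(\<gamma>-1))"
      using \<gamma> A r by (intro ennreal_powr_le_enn_rpow) auto
    then have "ennreal L \<le> enn_rpow (?I / ennreal (t powr d)) (1/(\<gamma>-1)) / ennreal t"
      unfolding L_def using True t by (intro ennreal_le_divide_ennreal) auto
    then show ?thesis using True t by (simp add: d_def)
  qed simp
  have "ennreal L * ennreal (2*r) = (\<integral>\<^sup>+ t. ennreal L * indicator {2*r..4*r} t \<partial>lborel)"
    using r by (simp add: nn_integral_cmult_indicator)
  also have "\<dots> \<le> wolff \<beta> \<gamma> f x"
    unfolding wolff_def by (intro nn_integral_mono integrand)
  finally have W: "ennreal (L * (2*r)) \<le> wolff \<beta> \<gamma> f x"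
    using \<open>L \<ge> 0\<close> r by (simp add: ennreal_mult)
  have "A * r powr E / (4*r) powr d = (A * 4 powr (-d)) * r powr (E - d)"
    using r by (simp add: powr_mult powr_diff powr_minus divide_simps)
  then have "(A * r powr E / (4*r) powr d) powr (1/(\<gamma>-1)) =
      (A * 4 powr (-d)) powr (1/(\<gamma>-1)) * r powr ((E - d)/(\<gamma>-1))"
    using r A by (simp add: powr_mult powr_powr)
  then have "L * (2*r) = (A * 4 powr (-d)) powr (1/(\<gamma>-1)) / 2 * r powr ((E - d)/(\<gamma>-1))"
    unfolding L_def using r by (simp add: field_simps)
  with W show ?thesis by (simp add: d_def)
qed

lemma wolff_equation_decay_exponent_le:
  fixes w c f :: "real^'n \<Rightarrow> real"
  assumes eq: "AE x in lebesgue. ennreal (w x) = ennreal (c x) * wolff \<beta> \<gamma> f x"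
    and \<gamma>: "\<gamma> > 1" and d: "\<beta> * \<gamma> < real CARD('n)"
    and C: "C > 0" "\<And>x. 1/C \<le> c x" and w_nonneg: "\<And>x. 0 \<le> w x"
    and Cw: "Cw > 0" and upper: "\<And>x. norm x \<ge> R \<Longrightarrow> w x \<le> Cw * norm x powr (-\<theta>)"
    and A: "A > 0"
    and ball: "\<And>x t. norm x \<ge> R' \<Longrightarrow> 2 * norm x \<le> t \<Longrightarrow> t \<le> 4 * norm x \<Longrightarrow>
       ennreal (A * norm x powr E) \<le> (\<integral>\<^sup>+ y. indicator (ball x t) y * ennreal (f y) \<partial>lebesgue)"
  shows "(E - (real CARD('n) - \<beta> * \<gamma>)) / (\<gamma> - 1) \<le> -\<theta>"
proof -
  define B where "B = (A * 4 powr (-(real CARD('n) - \<beta> * \<gamma>))) powr (1/(\<gamma>-1)) / 2"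
  have "B > 0" using A by (simp add: B_def)
  then have K: "1/C * B > 0" using C by simp
  show ?thesis
  proof (rule powr_exponent_le_of_frequently_le[OF K Cw])
    fix R'' :: real
    obtain x :: "real^'n" where x: "norm x \<ge> max R'' (max 1 (max R R'))"
      and eqx: "ennreal (w x) = ennreal (c x) * wolff \<beta> \<gamma> f x"
      using AE_lebesgue_exists_norm_ge[OF eq] by blast
    have "ennreal (B * norm x powr ((E - (real CARD('n) - \<beta> * \<gamma>)) / (\<gamma> - 1))) \<le> wolff \<beta> \<gamma> f x"
      unfolding B_def using x by (intro wolff_ge_of_ball_integral_ge \<gamma> d A ball) auto
    then have "1/C * (B * norm x powr ((E - (real CARD('n) - \<beta> * \<gamma>)) / (\<gamma> - 1))) \<le> w x"
      by (rule mult_le_of_ennreal_eq_mult[OF eqx]) (use C w_nonneg \<open>B > 0\<close> in auto)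
    also have "\<dots> \<le> Cw * norm x powr (-\<theta>)" using upper x by auto
    finally show "\<exists>r\<ge>R''. r > 0 \<and> 1/C * B * r powr ((E - (real CARD('n) - \<beta> * \<gamma>)) / (\<gamma> - 1))
        \<le> Cw * r powr (-\<theta>)"
      using x by (intro exI[of _ "norm x"]) auto
  qed
qed

(* A single fixed annulus inside B(x,t) already gives W(f)(x) \<gtrsim> |x|^(-(n-\<beta>\<gamma>)/(\<gamma>-1)). *)
lemma wolff_solution_decay_exponent_le_critical:
  fixes w c z :: "real^'n \<Rightarrow> real"
  assumes eq: "AE x in lebesgue. ennreal (w x) = ennreal (c x) * wolff \<beta> \<gamma> (\<lambda>y. norm y powr \<sigma> * z y powr s) x"
    and \<gamma>: "\<gamma> > 1" and d: "\<beta> * \<gamma> < real CARD('n)"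
    and C: "C > 0" "\<And>x. 1/C \<le> c x" and w_nonneg: "\<And>x. 0 \<le> w x"
    and Cw: "Cw > 0" and upper: "\<And>x. norm x \<ge> R \<Longrightarrow> w x \<le> Cw * norm x powr (-\<theta>)"
    and Cz: "Cz > 0" and \<theta>z: "\<theta>z \<ge> 0" and s: "s > 0"
    and lower: "\<And>y. norm y \<ge> Rz \<Longrightarrow> (1/Cz) * norm y powr (-\<theta>z) \<le> z y"
  shows "\<theta> \<le> (real CARD('n) - \<beta> * \<gamma>) / (\<gamma> - 1)"
proof -
  obtain K where K: "K > 0" and ball: "\<And>\<rho> S. \<rho> > 0 \<Longrightarrow> \<rho> \<ge> Rz \<Longrightarrow> ball 0 (2*\<rho>) - ball 0 \<rho> \<subseteq> S \<Longrightarrow>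
      ennreal (K * \<rho> powr (\<sigma> - \<theta>z * s + DIM(real^'n)))
        \<le> (\<integral>\<^sup>+ y. indicator S y * ennreal (norm y powr \<sigma> * z y powr s) \<partial>lebesgue)"
    using ball_integral_weighted_power_ge[OF Cz \<theta>z s lower] by blast
  define \<rho> where "\<rho> = max Rz 1"
  define A where "A = K * \<rho> powr (\<sigma> - \<theta>z * s + DIM(real^'n))"
  have "(0 - (real CARD('n) - \<beta> * \<gamma>)) / (\<gamma> - 1) \<le> -\<theta>"
  proof (rule wolff_equation_decay_exponent_le[OF eq \<gamma> d C w_nonneg Cw upper])
    show "A > 0" using K by (simp add: A_def \<rho>_def)
    fix x :: "real^'n" and t assume x: "norm x \<ge> 2 * \<rho>" and t: "2 * norm x \<le> t"
    have \<rho>: "\<rho> > 0" "\<rho> \<ge> Rz" by (auto simp: \<rho>_def)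
    have "ball 0 (2*\<rho>) - ball 0 \<rho> \<subseteq> ball x t"
      using x t by (rule annulus_subset_ball)
    from ball[OF \<rho> this] show "ennreal (A * norm x powr 0)
        \<le> (\<integral>\<^sup>+ y. indicator (ball x t) y * ennreal (norm y powr \<sigma> * z y powr s) \<partial>lebesgue)"
      using x \<rho> by (simp add: A_def)
  qed
  then show ?thesis by (smt (verit) minus_divide_left)
qed

(* Uses the annulus |x|/2 \<le> |y| < |x|, on which f \<gtrsim> |x|^(\<sigma> - s \<theta>z). *)
lemma wolff_solution_decay_exponent_le_coupled:
  fixes w c z :: "real^'n \<Rightarrow> real"
  assumes eq: "AE x in lebesgue. ennreal (w x) = ennreal (c x) * wolff \<beta> \<gamma> (\<lambda>y. norm y powr \<sigma> * z y powr s) x"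
    and \<gamma>: "\<gamma> > 1" and d: "\<beta> * \<gamma> < real CARD('n)"
    and C: "C > 0" "\<And>x. 1/C \<le> c x" and w_nonneg: "\<And>x. 0 \<le> w x"
    and Cw: "Cw > 0" and upper: "\<And>x. norm x \<ge> R \<Longrightarrow> w x \<le> Cw * norm x powr (-\<theta>)"
    and Cz: "Cz > 0" and \<theta>z: "\<theta>z \<ge> 0" and s: "s > 0"
    and lower: "\<And>y. norm y \<ge> Rz \<Longrightarrow> (1/Cz) * norm y powr (-\<theta>z) \<le> z y"
  shows "\<theta> * (\<gamma> - 1) \<le> s * \<theta>z - \<sigma> - \<beta> * \<gamma>"
proof -
  obtain K where K: "K > 0" and ball: "\<And>\<rho> S. \<rho> > 0 \<Longrightarrow> \<rho> \<ge> Rz \<Longrightarrow> ball 0 (2*\<rho>) - ball 0 \<rho> \<subseteq> S \<Longrightarrow>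
      ennreal (K * \<rho> powr (\<sigma> - \<theta>z * s + DIM(real^'n)))
        \<le> (\<integral>\<^sup>+ y. indicator S y * ennreal (norm y powr \<sigma> * z y powr s) \<partial>lebesgue)"
    using ball_integral_weighted_power_ge[OF Cz \<theta>z s lower] by blast
  define E where "E = \<sigma> - \<theta>z * s + real CARD('n)"
  have "(E - (real CARD('n) - \<beta> * \<gamma>)) / (\<gamma> - 1) \<le> -\<theta>"
  proof (rule wolff_equation_decay_exponent_le[OF eq \<gamma> d C w_nonneg Cw upper])
    show "K * 2 powr (-E) > 0" using K by simp
    fix x :: "real^'n" and t assume x: "norm x \<ge> max (2 * Rz) 1" and t: "2 * norm x \<le> t"
    have \<rho>: "norm x / 2 > 0" "norm x / 2 \<ge> Rz" using x by auto
    have "ball 0 (2 * (norm x / 2)) - ball 0 (norm x / 2) \<subseteq> ball x t"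
      using t by (intro annulus_subset_ball) auto
    from ball[OF \<rho> this] have "ennreal (K * (norm x / 2) powr E)
        \<le> (\<integral>\<^sup>+ y. indicator (ball x t) y * ennreal (norm y powr \<sigma> * z y powr s) \<partial>lebesgue)"
      by (simp add: E_def)
    moreover have "K * (norm x / 2) powr E = K * 2 powr (-E) * norm x powr E"
      using x by (simp add: powr_divide powr_minus_divide)
    ultimately show "ennreal (K * 2 powr (-E) * norm x powr E)
        \<le> (\<integral>\<^sup>+ y. indicator (ball x t) y * ennreal (norm y powr \<sigma> * z y powr s) \<partial>lebesgue)"
      by simp
  qed
  then have "\<sigma> - \<theta>z * s + \<beta> * \<gamma> \<le> -\<theta> * (\<gamma> - 1)"
    using \<gamma> by (simp add: E_def divide_le_eq)
  then show ?thesis by (simp add: algebra_simps)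
qed

theorem proposition8:
  fixes u v c\<^sub>1 c\<^sub>2 :: "real^'n \<Rightarrow> real"
    and \<beta> \<gamma> p q \<sigma>\<^sub>1 \<sigma>\<^sub>2 :: real
  defines "n \<equiv> real CARD('n)"
  defines "q\<^sub>0 \<equiv> (\<beta> * \<gamma> * (\<gamma> - 1 + q) + (\<gamma> - 1) * \<sigma>\<^sub>1 + \<sigma>\<^sub>2 * q) / (p * q - (\<gamma> - 1)^2)"
  defines "p\<^sub>0 \<equiv> (\<beta> * \<gamma> * (\<gamma> - 1 + p) + (\<gamma> - 1) * \<sigma>\<^sub>2 + \<sigma>\<^sub>1 * p) / (p * q - (\<gamma> - 1)^2)"
  assumes n3: "CARD('n) \<ge> 3"
    and beta: "\<beta> > 0" and gamma: "\<gamma> > 1" and bg: "\<beta> * \<gamma> < n"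
    and pq_pos: "p > 0" "q > 0" and qp: "q \<ge> p" and pq: "p * q > (\<gamma> - 1)^2"
    and sig: "\<sigma>\<^sub>1 > - (\<beta> * \<gamma>)" "\<sigma>\<^sub>2 > - (\<beta> * \<gamma>)" "\<sigma>\<^sub>1 \<le> \<sigma>\<^sub>2"
    and q0p0: "q\<^sub>0 + p\<^sub>0 \<le> (n - \<beta> * \<gamma>) / (\<gamma> - 1)"
    and c1: "double_bounded c\<^sub>1" and c2: "double_bounded c\<^sub>2"
    and sol: "positive_solution \<beta> \<gamma> p q \<sigma>\<^sub>1 \<sigma>\<^sub>2 c\<^sub>1 c\<^sub>2 u v"
    and bdd: "bounded (range u)" "bounded (range v)"
    and decay: "\<exists>\<theta>\<^sub>1>0. \<exists>\<theta>\<^sub>2>0. asymp_simeq u (\<lambda>x. norm x powr (- \<theta>\<^sub>1))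
                                 \<and> asymp_simeq v (\<lambda>x. norm x powr (- \<theta>\<^sub>2))"
    and optint_u: "\<And>r. r > n * (\<gamma> - 1) / (n - \<beta> * \<gamma>) \<Longrightarrow> in_Lp r u"
    and optint_v: "\<And>s. s > max (n * (\<gamma> - 1) / (n - \<beta> * \<gamma>))
                       (n * (\<gamma> - 1) / (p * (n - \<beta> * \<gamma>) / (\<gamma> - 1) - (\<beta> * \<gamma> + \<sigma>\<^sub>2)))
                    \<Longrightarrow> in_Lp s v"
    and hyp: "p * (n - \<beta> * \<gamma>) / (\<gamma> - 1) - \<sigma>\<^sub>2 < n"
  shows "asymp_simeq v (\<lambda>x. norm x powr
           (- ((p * (n - \<beta> * \<gamma>) / (\<gamma> - 1) - (\<beta> * \<gamma> + \<sigma>\<^sub>2)) / (\<gamma> - 1))))"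
proof -
  define k where "k = p * (n - \<beta> * \<gamma>) / (\<gamma> - 1) - (\<beta> * \<gamma> + \<sigma>\<^sub>2)"
  have dim: "\<beta> * \<gamma> < real CARD('n)" using bg by (simp add: n_def)
  from decay obtain \<theta>\<^sub>1 \<theta>\<^sub>2 where \<theta>: "\<theta>\<^sub>1 > 0" "\<theta>\<^sub>2 > 0"
    and u_simeq: "asymp_simeq u (\<lambda>x. norm x powr (- \<theta>\<^sub>1))"
    and v_simeq: "asymp_simeq v (\<lambda>x. norm x powr (- \<theta>\<^sub>2))" by blast
  obtain cu Ru where cu: "cu > 0" and u_lower: "\<And>x. norm x \<ge> Ru \<Longrightarrow> (1/cu) * norm x powr (- \<theta>\<^sub>1) \<le> u x"
    and u_upper: "\<And>x. norm x \<ge> Ru \<Longrightarrow> u x \<le> cu * norm x powr (- \<theta>\<^sub>1)"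
    using asymp_simeq_powrE[OF u_simeq] by blast
  obtain cv Rv where cv: "cv > 0" and v_lower: "\<And>x. norm x \<ge> Rv \<Longrightarrow> (1/cv) * norm x powr (- \<theta>\<^sub>2) \<le> v x"
    and v_upper: "\<And>x. norm x \<ge> Rv \<Longrightarrow> v x \<le> cv * norm x powr (- \<theta>\<^sub>2)"
    using asymp_simeq_powrE[OF v_simeq] by blast
  from c1 c2 obtain C\<^sub>1 C\<^sub>2 where C: "C\<^sub>1 > 0" "\<And>x. 1/C\<^sub>1 \<le> c\<^sub>1 x" "C\<^sub>2 > 0" "\<And>x. 1/C\<^sub>2 \<le> c\<^sub>2 x"
    unfolding double_bounded_def by blast
  from sol have nonneg: "\<And>x. 0 \<le> u x" "\<And>x. 0 \<le> v x"
    and u_eq: "AE x in lebesgue. ennreal (u x) =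
        ennreal (c\<^sub>1 x) * wolff \<beta> \<gamma> (\<lambda>y. norm y powr \<sigma>\<^sub>1 * v y powr q) x"
    and v_eq: "AE x in lebesgue. ennreal (v x) =
        ennreal (c\<^sub>2 x) * wolff \<beta> \<gamma> (\<lambda>y. norm y powr \<sigma>\<^sub>2 * u y powr p) x"
    unfolding positive_solution_def by (auto intro: less_imp_le)
  have "\<theta>\<^sub>1 \<le> (n - \<beta> * \<gamma>) / (\<gamma> - 1)"
    using wolff_solution_decay_exponent_le_critical[OF u_eq gamma dim C(1,2) nonneg(1)
        cu u_upper cv _ pq_pos(2) v_lower] \<theta> by (simp add: n_def)
  moreover have "\<theta>\<^sub>2 * (\<gamma> - 1) \<le> p * \<theta>\<^sub>1 - \<sigma>\<^sub>2 - \<beta> * \<gamma>"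
    using wolff_solution_decay_exponent_le_coupled[OF v_eq gamma dim C(3,4) nonneg(2)
        cv v_upper cu _ pq_pos(1) u_lower] \<theta> by simp
  ultimately have upper: "\<theta>\<^sub>2 * (\<gamma> - 1) \<le> k"
    using pq_pos mult_left_mono[of "\<theta>\<^sub>1" _ p] by (fastforce simp: k_def)
  have "0 < \<theta>\<^sub>2 * (\<gamma> - 1)" using \<theta> gamma by simp
  then have k: "0 < k" "k < n - \<beta> * \<gamma>"
    using upper hyp by (auto simp: k_def)
  have "real CARD('n) \<le> \<theta>\<^sub>2 * max (n * (\<gamma> - 1) / (n - \<beta> * \<gamma>)) (n * (\<gamma> - 1) / k)"
    unfolding k_def
    by (rule decay_exponent_ge_of_in_Lp[OF cv \<theta>(2) _ v_lower optint_v])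
      (use gamma bg in \<open>auto simp: n_def intro!: max.coboundedI1 divide_nonneg_pos\<close>)
  then have "n \<le> \<theta>\<^sub>2 * max (n * (\<gamma> - 1) / (n - \<beta> * \<gamma>)) (n * (\<gamma> - 1) / k)"
    by (simp add: n_def)
  also have "\<dots> = \<theta>\<^sub>2 * (n * (\<gamma> - 1) / k)"
    using k gamma n3 by (auto simp: n_def max_def intro!: divide_left_mono)
  finally have "n * k \<le> n * (\<theta>\<^sub>2 * (\<gamma> - 1))"
    using k by (simp add: field_simps)
  moreover have "n > 0" using n3 by (simp add: n_def)
  ultimately have "k \<le> \<theta>\<^sub>2 * (\<gamma> - 1)" by simp
  with upper gamma have "\<theta>\<^sub>2 = k / (\<gamma> - 1)" by (simp add: field_simps)
  then show ?thesis using v_simeq by (simp add: k_def)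
qed

end
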